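(* Let $R=\mathbb Z/n\mathbb Z$ with $n\ge 2$, and let $M$ be a free $R[\mathbb Z\times\mathbb Z]$-module of finite rank with a fixed finite subset $F$ of non-zero elements whose subset sum problem is undecidable. Then there is a fixed rational subset of $M\rtimes(\mathbb Z\times\mathbb Z)$ whose membership problem is undecidable.
   Context: The subset sum problem for $F$ asks, given $m\in M$, whether there exist pairwise distinct $g_1,\dots,g_n\in\mathbb Z\times\mathbb Z$ and $f_1,\dots,f_n\in F$ with $m=\sum_i g_if_i$. $M\rtimes(\mathbb Z\times\mathbb Z)$ is $M\times(\mathbb Z\times\mathbb Z)$ with $(m,g)(m',g')=(m+gm',g+g')$; it is finitely generated. For a group $H$ with finite generating set $\Delta$ and canonical map $\pi:(\Delta\cup\Delta^{-1})^*\to H$, a rational subset is a set $\pi(L)$ with $L$ a regular language over $\Delta\cup\Delta^{-1}$; its membership problem asks, given a word $w$, whether $\pi(w)\in\pi(L)$. *)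

theory Defs
  imports Main "HOL-Library.Nat_Bijection"
begin

datatype recf = Zer | Sc | Proj nat | Comp recf "recf list" | PrimRec recf recf | Mn recf

inductive reval :: "recf \<Rightarrow> nat list \<Rightarrow> nat \<Rightarrow> bool" where
  zer: "reval Zer xs 0"
| sc: "reval Sc (x # xs) (Suc x)"
| proj: "i < length xs \<Longrightarrow> reval (Proj i) xs (xs ! i)"
| comp: "length ys = length gs \<Longrightarrow> (\<forall>i<length gs. reval (gs ! i) xs (ys ! i))
          \<Longrightarrow> reval f ys z \<Longrightarrow> reval (Comp f gs) xs z"
| pr0: "reval f xs y \<Longrightarrow> reval (PrimRec f g) (0 # xs) y"
| prS: "reval (PrimRec f g) (m # xs) y \<Longrightarrow> reval g (m # y # xs) z
          \<Longrightarrow> reval (PrimRec f g) (Suc m # xs) z"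
| mn: "reval f (y # xs) 0 \<Longrightarrow> (\<forall>z<y. \<exists>v. 0 < v \<and> reval f (z # xs) v)
          \<Longrightarrow> reval (Mn f) xs y"

definition decidable :: "nat set \<Rightarrow> bool" where
  "decidable A \<longleftrightarrow> (\<exists>f. \<forall>x. reval f [x] (if x \<in> A then 1 else 0))"

text \<open>An element of M is represented by its coefficient function
  ((a,b),j) \<mapsto> coefficient of t^(a,b) e_j, with values in {0..<n} (representing Z/nZ),
  finite support, and support in index range j < k.\<close>
type_synonym melt = "(int \<times> int) \<times> nat \<Rightarrow> int"

definition Mcar :: "nat \<Rightarrow> nat \<Rightarrow> melt set" where
  "Mcar n k = {m. (\<forall>x. 0 \<le> m x \<and> m x < int n) \<and> finite {x. m x \<noteq> 0}
                   \<and> (\<forall>g j. k \<le> j \<longrightarrow> m (g, j) = 0)}"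

definition mzero :: melt where "mzero = (\<lambda>_. 0)"

definition madd :: "nat \<Rightarrow> melt \<Rightarrow> melt \<Rightarrow> melt" where
  "madd n m m' = (\<lambda>x. (m x + m' x) mod int n)"

definition mneg :: "nat \<Rightarrow> melt \<Rightarrow> melt" where
  "mneg n m = (\<lambda>x. (- m x) mod int n)"

text \<open>Action of g = (p,q) in Z x Z: multiplication by the monomial t^(p,q).\<close>
definition mshift :: "int \<times> int \<Rightarrow> melt \<Rightarrow> melt" where
  "mshift g m = (\<lambda>((a, b), j). m ((a - fst g, b - snd g), j))"

definition msum :: "nat \<Rightarrow> ((int \<times> int) \<times> melt) list \<Rightarrow> melt" where
  "msum n ps = foldr (\<lambda>(g, f) acc. madd n (mshift g f) acc) ps mzero"

definition subset_sum_set :: "nat \<Rightarrow> melt set \<Rightarrow> melt set" where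
  "subset_sum_set n F = {m. \<exists>gs fs. length gs = length fs \<and> distinct gs \<and> set fs \<subseteq> F
                                 \<and> m = msum n (zip gs fs)}"

text \<open>Encoding of elements of M by natural numbers: a code is a list of entries
  ((a,b), j, c) standing for c * t^(a,b) e_j; the element is their sum (reduced mod n;
  entries with j >= k contribute nothing).  Every element of M has a code.\<close>
definition dec_entry :: "nat \<Rightarrow> (int \<times> int) \<times> nat \<times> nat" where
  "dec_entry e = (let (u, r) = prod_decode e; (v, r2) = prod_decode r; (j, c) = prod_decode r2
                  in ((int_decode u, int_decode v), j, c))"

definition decodeM :: "nat \<Rightarrow> nat \<Rightarrow> nat \<Rightarrow> melt" where
  "decodeM n k c = (\<lambda>(g, j). if j < k then
      (\<Sum>e\<leftarrow>map dec_entry (list_decode c). if fst e = g \<and> fst (snd e) = j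
                                              then int (snd (snd e)) else 0) mod int n
      else 0)"

type_synonym helt = "melt \<times> (int \<times> int)"

definition hmul :: "nat \<Rightarrow> helt \<Rightarrow> helt \<Rightarrow> helt" where
  "hmul n x y = (madd n (fst x) (mshift (snd x) (fst y)),
                 (fst (snd x) + fst (snd y), snd (snd x) + snd (snd y)))"

definition hone :: helt where "hone = (mzero, (0, 0))"

definition hinv :: "nat \<Rightarrow> helt \<Rightarrow> helt" where
  "hinv n x = (mneg n (mshift (- fst (snd x), - snd (snd x)) (fst x)),
               (- fst (snd x), - snd (snd x)))"

definition basis_vec :: "nat \<Rightarrow> melt" where
  "basis_vec i = (\<lambda>(g, j). if g = (0, 0) \<and> j = i then 1 else 0)"

definition hgen :: "nat \<Rightarrow> nat \<Rightarrow> helt" where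
  "hgen k i = (if i < k then (basis_vec i, (0, 0))
               else if i = k then (mzero, (1, 0)) else (mzero, (0, 1)))"

text \<open>Letters of Delta \<union> Delta^-1 are the numbers x < 2(k+2): x stands for
  generator (x div 2), inverted iff x is odd.\<close>
definition letter_val :: "nat \<Rightarrow> nat \<Rightarrow> nat \<Rightarrow> helt" where
  "letter_val n k x = (if even x then hgen k (x div 2) else hinv n (hgen k (x div 2)))"

definition word_val :: "nat \<Rightarrow> nat \<Rightarrow> nat list \<Rightarrow> helt" where
  "word_val n k w = foldr (\<lambda>x acc. hmul n (letter_val n k x) acc) w hone"

definition decodeW :: "nat \<Rightarrow> nat \<Rightarrow> nat list" where
  "decodeW k c = map (\<lambda>x. x mod (2 * (k + 2))) (list_decode c)"

datatype 'a rexp = RZero | ROne | RAtom 'a | RPlus "'a rexp" "'a rexp"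
  | RTimes "'a rexp" "'a rexp" | RStar "'a rexp"

fun lang :: "'a rexp \<Rightarrow> 'a list set" where
  "lang RZero = {}"
| "lang ROne = {[]}"
| "lang (RAtom a) = {[a]}"
| "lang (RPlus r s) = lang r \<union> lang s"
| "lang (RTimes r s) = {u @ v | u v. u \<in> lang r \<and> v \<in> lang s}"
| "lang (RStar r) = {concat ws | ws. set ws \<subseteq> lang r}"

fun atoms :: "'a rexp \<Rightarrow> 'a set" where
  "atoms RZero = {}"
| "atoms ROne = {}"
| "atoms (RAtom a) = {a}"
| "atoms (RPlus r s) = atoms r \<union> atoms s"
| "atoms (RTimes r s) = atoms r \<union> atoms s"
| "atoms (RStar r) = atoms r"

end

theory Submission
  imports Defs "HOL-Library.Product_Plus" "HOL-Library.Product_Lexorder"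
    "HOL-Library.Function_Algebras" "HOL-Library.Multiset"
begin

text \<open>A code of an element \<open>m\<close> of \<open>M\<close> is translated, by a primitive recursive function,
  into a word representing \<open>(m, 0)\<close>.  Let \<open>X\<close> be the set of words in the generators of
  \<open>\<int> \<times> \<int>\<close>, \<open>T\<close> a rational set of such words with lexicographically positive value, reaching
  every positive value, and \<open>W\<close> a finite set of words of values \<open>(f, 0)\<close>, \<open>f \<in> F\<close>.  Reading
  a word of \<open>X (T W)\<^sup>* X\<close>, the position runs through points \<open>g\<^sub>1 < g\<^sub>2 < \<dots>\<close> and
  deposits \<open>g\<^sub>i f\<^sub>i\<close> at each of them, so the word has value \<open>(m, 0)\<close> iff
  \<open>m = \<Sum> g\<^sub>i f\<^sub>i\<close> with all \<open>g\<^sub>i\<close> distinct: increasing positions are distinct, and a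
  family with distinct positions can be sorted.  This reduces the subset sum problem for \<open>F\<close>
  many-one to membership in \<open>X (T W)\<^sup>* X\<close>.\<close>

section \<open>Computable functions\<close>

definition computable :: "nat \<Rightarrow> (nat list \<Rightarrow> nat) \<Rightarrow> bool" where
  "computable n h \<longleftrightarrow> (\<exists>f. \<forall>xs. length xs = n \<longrightarrow> reval f xs (h xs))"

lemma computable_cong:
  "computable n h \<Longrightarrow> (\<And>xs. length xs = n \<Longrightarrow> h xs = h' xs) \<Longrightarrow> computable n h'"
  unfolding computable_def by (elim exE) (rule exI, auto)

lemma computable_zero: "computable n (\<lambda>_. 0)"
  unfolding computable_def by (auto intro: reval.zer)

lemma computable_nth: "i < n \<Longrightarrow> computable n (\<lambda>xs. xs ! i)"
  unfolding computable_def by (auto intro: reval.proj)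

lemma computable_Suc_nth_0: "computable 1 (\<lambda>xs. Suc (xs ! 0))"
  unfolding computable_def
proof (intro exI allI impI)
  fix xs :: "nat list"
  assume "length xs = 1"
  then obtain y where "xs = [y]" by (auto simp: length_Suc_conv)
  then show "reval Sc xs (Suc (xs ! 0))" by (simp add: reval.sc)
qed

lemma list_choice:
  assumes "\<forall>h\<in>set hs. \<exists>f. P f h"
  shows "\<exists>fs. length fs = length hs \<and> (\<forall>i<length hs. P (fs ! i) (hs ! i))"
  using assms
proof (induction hs)
  case (Cons h hs)
  then obtain fs where "length fs = length hs" "\<forall>i<length hs. P (fs ! i) (hs ! i)" by auto
  moreover obtain f where "P f h" using Cons.prems by auto
  ultimately show ?case
    by (intro exI[of _ "f # fs"]) (auto simp: nth_Cons split: nat.splits)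
qed simp

lemma computable_comp:
  assumes g: "computable m g" and len: "length hs = m" and hs: "\<forall>h\<in>set hs. computable n h"
  shows "computable n (\<lambda>xs. g (map (\<lambda>h. h xs) hs))"
proof -
  obtain gf where gf: "\<forall>ys. length ys = m \<longrightarrow> reval gf ys (g ys)"
    using g unfolding computable_def by auto
  obtain fs where fs: "length fs = length hs"
    "\<forall>i<length hs. \<forall>xs. length xs = n \<longrightarrow> reval (fs ! i) xs ((hs ! i) xs)"
    using list_choice[of hs "\<lambda>f h. \<forall>xs. length xs = n \<longrightarrow> reval f xs (h xs)"] hs
    unfolding computable_def by auto
  show ?thesis unfolding computable_def
  proof (intro exI allI impI)
    fix xs :: "nat list"
    assume "length xs = n"
    then show "reval (Comp gf fs) xs (g (map (\<lambda>h. h xs) hs))"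
      using fs gf len by (intro reval.comp[where ys="map (\<lambda>h. h xs) hs"]) auto
  qed
qed

lemma computable_comp1:
  "computable 1 g \<Longrightarrow> computable n a \<Longrightarrow> computable n (\<lambda>xs. g [a xs])"
  using computable_comp[of 1 g "[a]" n] by simp

lemma computable_comp2:
  "computable 2 g \<Longrightarrow> computable n a \<Longrightarrow> computable n b \<Longrightarrow>
    computable n (\<lambda>xs. g [a xs, b xs])"
  using computable_comp[of 2 g "[a, b]" n] by simp

lemma computable_comp3:
  "computable 3 g \<Longrightarrow> computable n a \<Longrightarrow> computable n b \<Longrightarrow> computable n c \<Longrightarrow>
    computable n (\<lambda>xs. g [a xs, b xs, c xs])"
  using computable_comp[of 3 g "[a, b, c]" n] by simp

lemma computable_rec_nat:
  assumes base: "computable n base" and step: "computable (n + 2) step"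
    and h: "\<And>m ys. length ys = n \<Longrightarrow> h (m # ys) = rec_nat (base ys) (\<lambda>m y. step (m # y # ys)) m"
  shows "computable (n + 1) h"
proof -
  obtain f where f: "\<forall>xs. length xs = n \<longrightarrow> reval f xs (base xs)"
    using base unfolding computable_def by auto
  obtain g where g: "\<forall>xs. length xs = n + 2 \<longrightarrow> reval g xs (step xs)"
    using step unfolding computable_def by auto
  have rec: "reval (PrimRec f g) (m # ys) (rec_nat (base ys) (\<lambda>m y. step (m # y # ys)) m)"
    if "length ys = n" for m ys
  proof (induction m)
    case 0
    then show ?case using f that by (simp add: reval.pr0)
  next
    case (Suc m)
    then show ?case using reval.prS[OF Suc] g that by simp
  qed
  show ?thesis unfolding computable_def
  proof (intro exI allI impI)
    fix xs :: "nat list"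
    assume "length xs = n + 1"
    then obtain m ys where "xs = m # ys" "length ys = n" by (cases xs) auto
    then show "reval (PrimRec f g) xs (h xs)" using rec h by simp
  qed
qed

lemma computable_Least:
  assumes g: "computable (Suc n) G" and ex: "\<And>xs. length xs = n \<Longrightarrow> \<exists>y. G (y # xs) = 0"
  shows "computable n (\<lambda>xs. LEAST y. G (y # xs) = 0)"
proof -
  obtain f where f: "\<forall>xs. length xs = Suc n \<longrightarrow> reval f xs (G xs)"
    using g unfolding computable_def by auto
  show ?thesis unfolding computable_def
  proof (intro exI allI impI)
    fix xs :: "nat list"
    assume l: "length xs = n"
    let ?y = "LEAST y. G (y # xs) = 0"
    have "G (?y # xs) = 0" using ex[OF l] by (rule LeastI_ex)
    moreover have "reval f (?y # xs) (G (?y # xs))" using f l by simp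
    ultimately have "reval f (?y # xs) 0" by simp
    moreover have "\<exists>v. 0 < v \<and> reval f (z # xs) v" if "z < ?y" for z
      using not_less_Least[OF that] f l by (intro exI[of _ "G (z # xs)"]) auto
    ultimately show "reval (Mn f) xs ?y" by (intro reval.mn) auto
  qed
qed

lemma computable_const: "computable n (\<lambda>_. c)"
proof (induction c)
  case 0
  show ?case by (rule computable_zero)
next
  case (Suc c)
  from computable_comp1[OF computable_Suc_nth_0 Suc] show ?case by simp
qed

lemma computable_Suc: "computable n a \<Longrightarrow> computable n (\<lambda>xs. Suc (a xs))"
  using computable_comp1[OF computable_Suc_nth_0] by simp

lemma computable_add:
  assumes "computable n a" and "computable n b"
  shows "computable n (\<lambda>xs. a xs + b xs)"
proof -
  have "rec_nat q (\<lambda>m y. Suc y) p = p + q" for p q :: nat by (induction p) auto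
  then have "computable (1 + 1) (\<lambda>xs. xs ! 0 + xs ! 1)"
    by (intro computable_rec_nat[where base="\<lambda>ys. ys ! 0" and step="\<lambda>ys. Suc (ys ! 1)"]
        computable_Suc computable_nth) (auto simp: length_Suc_conv)
  then have "computable 2 (\<lambda>xs. xs ! 0 + xs ! 1)" by (simp add: numeral_2_eq_2)
  from computable_comp2[OF this assms] show ?thesis by simp
qed

lemma computable_mult:
  assumes "computable n a" and "computable n b"
  shows "computable n (\<lambda>xs. a xs * b xs)"
proof -
  have "rec_nat 0 (\<lambda>m y. y + q) p = p * q" for p q :: nat by (induction p) auto
  then have "computable (1 + 1) (\<lambda>xs. xs ! 0 * xs ! 1)"
    by (intro computable_rec_nat[where base="\<lambda>ys. 0" and step="\<lambda>ys. ys ! 1 + ys ! 2"]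
        computable_zero computable_add computable_nth) (auto simp: length_Suc_conv)
  then have "computable 2 (\<lambda>xs. xs ! 0 * xs ! 1)" by (simp add: numeral_2_eq_2)
  from computable_comp2[OF this assms] show ?thesis by simp
qed

lemma computable_diff:
  assumes "computable n a" and "computable n b"
  shows "computable n (\<lambda>xs. a xs - b xs)"
proof -
  have "rec_nat 0 (\<lambda>m y. m) p = p - 1" for p :: nat by (cases p) auto
  then have "computable (0 + 1) (\<lambda>xs. xs ! 0 - 1)"
    by (intro computable_rec_nat[where base="\<lambda>ys. 0" and step="\<lambda>ys. ys ! 0"]
        computable_zero computable_nth) (auto simp: length_Suc_conv)
  then have "computable 1 (\<lambda>xs. xs ! 0 - 1)" by simp
  from computable_comp1[OF this computable_nth[of 1 3]]
  have pred: "computable 3 (\<lambda>ys. ys ! 1 - 1)" by simp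
  have "rec_nat q (\<lambda>m y. y - 1) p = q - p" for p q :: nat by (induction p) auto
  then have "computable (1 + 1) (\<lambda>xs. xs ! 1 - xs ! 0)"
    by (intro computable_rec_nat[where base="\<lambda>ys. ys ! 0" and step="\<lambda>ys. ys ! 1 - 1"]
        computable_nth) (use pred in \<open>auto simp: length_Suc_conv numeral_3_eq_3\<close>)
  then have "computable 2 (\<lambda>xs. xs ! 1 - xs ! 0)" by (simp add: numeral_2_eq_2)
  from computable_comp2[OF this assms(2,1)] show ?thesis by simp
qed

lemma computable_If_zero:
  assumes "computable n a" and "computable n b" and "computable n c"
  shows "computable n (\<lambda>xs. if a xs = 0 then b xs else c xs)"
proof -
  have "rec_nat q (\<lambda>m y. r) p = (if p = 0 then q else r)" for p q r :: nat by (cases p) auto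
  then have "computable (2 + 1) (\<lambda>xs. if xs ! 0 = 0 then xs ! 1 else xs ! 2)"
    by (intro computable_rec_nat[where base="\<lambda>ys. ys ! 0" and step="\<lambda>ys. ys ! 3"]
        computable_nth) (auto simp: length_Suc_conv)
  then have "computable 3 (\<lambda>xs. if xs ! 0 = 0 then xs ! 1 else xs ! 2)" by simp
  from computable_comp3[OF this assms] show ?thesis by (rule computable_cong) simp
qed

lemma computable_triangle:
  assumes "computable n a"
  shows "computable n (\<lambda>xs. triangle (a xs))"
proof -
  have "rec_nat 0 (\<lambda>m y. y + Suc m) p = triangle p" for p by (induction p) auto
  then have "computable (0 + 1) (\<lambda>xs. triangle (xs ! 0))"
    by (intro computable_rec_nat[where base="\<lambda>ys. 0" and step="\<lambda>ys. ys ! 1 + Suc (ys ! 0)"]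
        computable_zero computable_add computable_Suc computable_nth) (auto simp: length_Suc_conv)
  then have "computable 1 (\<lambda>xs. triangle (xs ! 0))" by simp
  from computable_comp1[OF this assms] show ?thesis by simp
qed

lemma computable_Least_unary:
  assumes "computable 2 (\<lambda>ys. G (ys ! 0) (ys ! 1))" and "\<And>x. \<exists>y. G y x = 0"
    and "computable n a"
  shows "computable n (\<lambda>xs. LEAST y. G y (a xs) = 0)"
proof -
  have "computable 1 (\<lambda>xs. LEAST y. G ((y # xs) ! 0) ((y # xs) ! 1) = 0)"
    using assms(1,2)
    by (intro computable_Least[where G="\<lambda>ys. G (ys ! 0) (ys ! 1)"])
      (auto simp: numeral_2_eq_2 length_Suc_conv)
  then have "computable 1 (\<lambda>xs. LEAST y. G y (xs ! 0) = 0)" by simp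
  from computable_comp1[OF this assms(3)] show ?thesis by simp
qed

lemma computable_prod_encode:
  assumes "computable n a" and "computable n b"
  shows "computable n (\<lambda>xs. prod_encode (a xs, b xs))"
proof -
  have "computable n (\<lambda>xs. triangle (a xs + b xs) + a xs)"
    by (intro computable_add computable_triangle assms)
  then show ?thesis by (simp add: prod_encode_def)
qed

lemma less_triangle_Suc: "m < triangle (Suc m)"
  by (induction m) auto

text \<open>The index of the diagonal of the Cantor pairing on which \<open>m\<close> lies.\<close>
definition triangle_root :: "nat \<Rightarrow> nat" where
  "triangle_root m = (LEAST s. m < triangle (Suc s))"

lemma triangle_root_bounds: "triangle (triangle_root m) \<le> m \<and> m < triangle (Suc (triangle_root m))"
proof -
  have upper: "m < triangle (Suc (triangle_root m))"
    unfolding triangle_root_def using less_triangle_Suc by (rule LeastI)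
  have "triangle (triangle_root m) \<le> m"
  proof (cases "triangle_root m")
    case (Suc s)
    then have "s < triangle_root m" by simp
    then have "\<not> m < triangle (Suc s)"
      unfolding triangle_root_def by (rule not_less_Least)
    then show ?thesis using Suc by simp
  qed simp
  with upper show ?thesis by simp
qed

lemma prod_decode_triangle_root:
  "prod_decode m = (m - triangle (triangle_root m), triangle_root m - (m - triangle (triangle_root m)))"
proof -
  let ?s = "triangle_root m"
  have "triangle ?s \<le> m" "m < triangle ?s + Suc ?s" using triangle_root_bounds[of m] by auto
  then have "prod_encode (m - triangle ?s, ?s - (m - triangle ?s)) = m"
    by (simp add: prod_encode_def)
  then show ?thesis by (metis prod_encode_inverse)
qed

lemma computable_triangle_root:
  assumes "computable n a"
  shows "computable n (\<lambda>xs. triangle_root (a xs))"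
proof -
  \<comment> \<open>In truncated arithmetic \<open>1 - (t - m) = 0\<close> says \<open>m < t\<close>.\<close>
  have least: "(LEAST s. 1 - (triangle (Suc s) - m) = 0) = triangle_root m" for m
    unfolding triangle_root_def by (intro arg_cong[where f=Least] ext) auto
  have "computable 2 (\<lambda>ys. 1 - (triangle (Suc (ys ! 0)) - ys ! 1))"
    by (intro computable_diff computable_const computable_triangle computable_Suc computable_nth) simp_all
  moreover have "\<exists>s. 1 - (triangle (Suc s) - m) = 0" for m
    using less_triangle_Suc[of m] by (intro exI[of _ m]) simp
  ultimately have "computable n (\<lambda>xs. LEAST s. 1 - (triangle (Suc s) - a xs) = 0)"
    by (rule computable_Least_unary[where G="\<lambda>s m. 1 - (triangle (Suc s) - m)", OF _ _ assms])
  then show ?thesis by (rule computable_cong) (rule least)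
qed

lemma computable_prod_decode:
  assumes "computable n a"
  shows computable_fst_prod_decode: "computable n (\<lambda>xs. fst (prod_decode (a xs)))"
    and computable_snd_prod_decode: "computable n (\<lambda>xs. snd (prod_decode (a xs)))"
  unfolding prod_decode_triangle_root fst_conv snd_conv
  by (intro computable_diff computable_triangle computable_triangle_root assms)+

lemma computable_div_2:
  assumes "computable n a"
  shows "computable n (\<lambda>xs. a xs div 2)"
proof -
  have least: "(LEAST q. 1 - (Suc (Suc (2 * q)) - u) = 0) = u div 2" for u :: nat
    by (rule Least_equality) auto
  have "computable 2 (\<lambda>ys. 1 - (Suc (Suc (2 * ys ! 0)) - ys ! 1))"
    by (intro computable_diff computable_const computable_mult computable_Suc computable_nth) simp_all
  moreover have "\<exists>q. 1 - (Suc (Suc (2 * q)) - u) = 0" for u :: nat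
    by (intro exI[of _ u]) simp
  ultimately have "computable n (\<lambda>xs. LEAST q. 1 - (Suc (Suc (2 * q)) - a xs) = 0)"
    by (rule computable_Least_unary[where G="\<lambda>q u. 1 - (Suc (Suc (2 * q)) - u)", OF _ _ assms])
  then show ?thesis by (rule computable_cong) (rule least)
qed

lemma computable_mod_2:
  assumes "computable n a"
  shows "computable n (\<lambda>xs. a xs mod 2)"
proof -
  have "computable n (\<lambda>xs. a xs - 2 * (a xs div 2))"
    by (intro computable_diff computable_mult computable_const computable_div_2 assms)
  then show ?thesis by (rule computable_cong) (simp add: minus_mult_div_eq_mod)
qed

lemma decidable_vimage:
  assumes "computable 1 (\<lambda>xs. h (xs ! 0))" and "decidable B"
  shows "decidable (h -` B)"
proof -
  obtain g where g: "\<forall>x. reval g [x] (if x \<in> B then 1 else 0)"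
    using assms(2) unfolding decidable_def by blast
  obtain f where f: "\<forall>xs. length xs = 1 \<longrightarrow> reval f xs (h (xs ! 0))"
    using assms(1) unfolding computable_def by blast
  have "reval (Comp g [f]) [c] (if c \<in> h -` B then 1 else 0)" for c
    using f[rule_format, of "[c]"] g by (intro reval.comp[where ys="[h c]"]) auto
  then show ?thesis unfolding decidable_def by blast
qed

section \<open>Words and their values\<close>

lemma mshift_apply: "mshift g m x = m ((fst (fst x) - fst g, snd (fst x) - snd g), snd x)"
  by (cases x) (auto simp: mshift_def)

lemma mshift_0 [simp]: "mshift 0 f = f"
  by (rule ext) (simp add: mshift_apply)

lemma mshift_mshift: "mshift a (mshift b f) = mshift (a + b) f"
  by (rule ext) (simp add: mshift_apply algebra_simps)

lemma mshift_add: "mshift g (f + h) = mshift g f + mshift g h"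
  by (rule ext) (simp add: mshift_apply)

lemma mshift_zero [simp]: "mshift g 0 = 0"
  by (rule ext) (simp add: mshift_apply)

text \<open>The value of a word in \<open>M \<rtimes> (\<int> \<times> \<int>)\<close> with integer instead of residue
  coefficients: \<open>word_vec\<close> is its \<open>M\<close>-component, \<open>word_shift\<close> its
  \<open>\<int> \<times> \<int>\<close>-component.\<close>
definition letter_vec :: "nat \<Rightarrow> nat \<Rightarrow> melt" where
  "letter_vec k l = (\<lambda>(g, j). if l div 2 < k \<and> g = (0, 0) \<and> j = l div 2
                              then (if even l then 1 else -1) else 0)"

definition letter_shift :: "nat \<Rightarrow> nat \<Rightarrow> int \<times> int" where
  "letter_shift k l =
     (if l div 2 < k then (0, 0)
      else if l div 2 = k then (if even l then (1, 0) else (-1, 0))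
      else (if even l then (0, 1) else (0, -1)))"

fun word_vec :: "nat \<Rightarrow> nat list \<Rightarrow> melt" where
  "word_vec k [] = 0"
| "word_vec k (l # w) = letter_vec k l + mshift (letter_shift k l) (word_vec k w)"

fun word_shift :: "nat \<Rightarrow> nat list \<Rightarrow> int \<times> int" where
  "word_shift k [] = 0"
| "word_shift k (l # w) = letter_shift k l + word_shift k w"

lemma word_vec_append:
  "word_vec k (u @ v) = word_vec k u + mshift (word_shift k u) (word_vec k v)"
  by (induction u) (auto simp: fun_eq_iff mshift_apply algebra_simps)

lemma word_shift_append: "word_shift k (u @ v) = word_shift k u + word_shift k v"
  by (induction u) (simp_all add: algebra_simps)

lemma fst_letter_val_mod: "fst (letter_val n k l) x mod int n = letter_vec k l x mod int n"
  by (cases x) (auto simp: letter_val_def hgen_def hinv_def letter_vec_def basis_vec_def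
      mneg_def mzero_def mshift_apply mod_minus_eq)

lemma snd_letter_val: "snd (letter_val n k l) = letter_shift k l"
  by (auto simp: letter_val_def hgen_def hinv_def letter_shift_def mzero_def)

lemma word_val_eq: "word_val n k w = ((\<lambda>x. word_vec k w x mod int n), word_shift k w)"
proof (induction w)
  case Nil
  then show ?case by (simp add: word_val_def hone_def mzero_def zero_prod_def)
next
  case (Cons l w)
  have val: "word_val n k (l # w) = hmul n (letter_val n k l) (word_val n k w)"
    by (simp add: word_val_def)
  have "fst (word_val n k (l # w)) x = word_vec k (l # w) x mod int n" for x
  proof -
    have "fst (word_val n k (l # w)) x
        = (fst (letter_val n k l) x + mshift (letter_shift k l) (word_vec k w) x mod int n) mod int n"
      unfolding val Cons hmul_def madd_def by (simp add: mshift_apply snd_letter_val)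
    also have "\<dots> = (fst (letter_val n k l) x mod int n + mshift (letter_shift k l) (word_vec k w) x) mod int n"
      by (simp only: mod_add_left_eq mod_add_right_eq)
    also have "\<dots> = word_vec k (l # w) x mod int n"
      by (simp add: fst_letter_val_mod mod_add_left_eq)
    finally show ?thesis .
  qed
  moreover have "snd (word_val n k (l # w)) = word_shift k (l # w)"
    unfolding val Cons hmul_def by (simp add: snd_letter_val prod_eq_iff)
  ultimately show ?case by (simp add: prod_eq_iff fun_eq_iff)
qed

lemma word_vec_moves: "\<forall>l\<in>set w. k \<le> l div 2 \<Longrightarrow> word_vec k w = 0"
  by (induction w) (auto simp: letter_vec_def fun_eq_iff mshift_apply)

lemma word_vec_move_letters:
  "set w \<subseteq> {2 * k, 2 * k + 1, 2 * k + 2, 2 * k + 3} \<Longrightarrow> word_vec k w = 0"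
  by (rule word_vec_moves) auto

lemma letter_shift_moves:
  "l = 2 * k \<Longrightarrow> letter_shift k l = (1, 0)"
  "l = 2 * k + 1 \<Longrightarrow> letter_shift k l = (-1, 0)"
  "l = 2 * k + 2 \<Longrightarrow> letter_shift k l = (0, 1)"
  "l = 2 * k + 3 \<Longrightarrow> letter_shift k l = (0, -1)"
  by (simp_all add: letter_shift_def)

lemma word_shift_replicate:
  "word_shift k (replicate t l) = (int t * fst (letter_shift k l), int t * snd (letter_shift k l))"
  by (induction t) (simp_all add: algebra_simps zero_prod_def prod_eq_iff)

lemma word_shift_replicate_moves:
  "l = 2 * k \<Longrightarrow> word_shift k (replicate t l) = (int t, 0)"
  "l = 2 * k + 1 \<Longrightarrow> word_shift k (replicate t l) = (- int t, 0)"
  "l = 2 * k + 2 \<Longrightarrow> word_shift k (replicate t l) = (0, int t)"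
  "l = 2 * k + 3 \<Longrightarrow> word_shift k (replicate t l) = (0, - int t)"
  by (simp_all add: word_shift_replicate letter_shift_moves)

lemma word_vec_replicate_basis:
  "j < k \<or> t = 0 \<Longrightarrow> word_vec k (replicate t (2 * j)) = (\<lambda>x. int t * letter_vec k (2 * j) x)"
  by (induction t) (auto simp: letter_shift_def fun_eq_iff algebra_simps mshift_apply)

lemma word_shift_replicate_basis: "j < k \<or> t = 0 \<Longrightarrow> word_shift k (replicate t (2 * j)) = 0"
  by (induction t) (auto simp: letter_shift_def zero_prod_def)

lemma letter_vec_basis:
  "letter_vec k (2 * i) (g, j) = (if i < k \<and> g = (0, 0) \<and> j = i then 1 else 0)"
  by (simp add: letter_vec_def)

definition move_word :: "nat \<Rightarrow> int \<times> int \<Rightarrow> nat list" where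
  "move_word k g = replicate (nat (fst g)) (2 * k) @ replicate (nat (- fst g)) (2 * k + 1) @
                   replicate (nat (snd g)) (2 * k + 2) @ replicate (nat (- snd g)) (2 * k + 3)"

lemma set_move_word: "set (move_word k g) \<subseteq> {2 * k, 2 * k + 1, 2 * k + 2, 2 * k + 3}"
  unfolding move_word_def by auto

lemma word_vec_move_word: "word_vec k (move_word k g) = 0"
  using set_move_word by (rule word_vec_move_letters)

lemma word_shift_move_word: "word_shift k (move_word k g) = g"
proof -
  have "word_shift k (move_word k g) = (int (nat (fst g)), 0) + ((- int (nat (- fst g)), 0) +
          ((0, int (nat (snd g))) + (0, - int (nat (- snd g)))))"
    unfolding move_word_def by (simp add: word_shift_append word_shift_replicate_moves)
  then show ?thesis by (cases g) auto
qed

definition monomial_word :: "nat \<Rightarrow> int \<times> int \<Rightarrow> nat \<Rightarrow> nat \<Rightarrow> nat list" where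
  "monomial_word k g j t = move_word k g @ replicate t (2 * j) @ move_word k (- g)"

lemma word_val_monomial_word:
  assumes "j < k \<or> t = 0"
  shows "word_vec k (monomial_word k g j t @ w)
           = mshift g (\<lambda>x. int t * letter_vec k (2 * j) x) + word_vec k w"
    and "word_shift k (monomial_word k g j t @ w) = word_shift k w"
proof -
  have move: "word_vec k (move_word k h @ v) = mshift h (word_vec k v)" for h v
    by (simp add: word_vec_append word_vec_move_word word_shift_move_word)
  have "word_vec k (replicate t (2 * j) @ v) = (\<lambda>x. int t * letter_vec k (2 * j) x) + word_vec k v"
    for v
    using assms by (simp add: word_vec_append word_vec_replicate_basis word_shift_replicate_basis)
  then show "word_vec k (monomial_word k g j t @ w)
           = mshift g (\<lambda>x. int t * letter_vec k (2 * j) x) + word_vec k w"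
    by (simp add: monomial_word_def move mshift_add mshift_mshift)
  show "word_shift k (monomial_word k g j t @ w) = word_shift k w"
    using assms by (simp add: monomial_word_def word_shift_append word_shift_move_word
        word_shift_replicate_basis)
qed

lemma set_monomial_word:
  "j < k \<or> t = 0 \<Longrightarrow> set (monomial_word k g j t) \<subseteq> {..<2 * (k + 2)}"
  using set_move_word[of k g] set_move_word[of k "- g"] by (auto simp: monomial_word_def)

definition cons_code :: "nat \<Rightarrow> nat \<Rightarrow> nat" where
  "cons_code x c = Suc (prod_encode (x, c))"

definition replicate_code :: "nat \<Rightarrow> nat \<Rightarrow> nat \<Rightarrow> nat" where
  "replicate_code x t c = rec_nat c (\<lambda>_. cons_code x) t"

lemma list_decode_cons_code: "list_decode (cons_code x c) = x # list_decode c"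
  by (simp add: cons_code_def)

lemma list_decode_replicate_code:
  "list_decode (replicate_code x t c) = replicate t x @ list_decode c"
  by (induction t) (simp_all add: replicate_code_def list_decode_cons_code)

lemma computable_cons_code:
  "computable n a \<Longrightarrow> computable n b \<Longrightarrow> computable n (\<lambda>xs. cons_code (a xs) (b xs))"
  unfolding cons_code_def by (intro computable_Suc computable_prod_encode)

lemma computable_replicate_code:
  assumes "computable n a" and "computable n b" and "computable n c"
  shows "computable n (\<lambda>xs. replicate_code (a xs) (b xs) (c xs))"
proof -
  have "computable (2 + 1) (\<lambda>xs. replicate_code (xs ! 1) (xs ! 0) (xs ! 2))"
    by (intro computable_rec_nat[where base="\<lambda>ys. ys ! 1" and step="\<lambda>ys. cons_code (ys ! 2) (ys ! 1)"]
        computable_cons_code computable_nth) (auto simp: length_Suc_conv replicate_code_def)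
  then have "computable 3 (\<lambda>xs. replicate_code (xs ! 1) (xs ! 0) (xs ! 2))" by simp
  from computable_comp3[OF this assms(2,1,3)] show ?thesis by (rule computable_cong) simp
qed

section \<open>Translating codes of module elements into words\<close>

definition entry_x :: "nat \<Rightarrow> nat" where
  "entry_x e = fst (prod_decode e)"

definition entry_y :: "nat \<Rightarrow> nat" where
  "entry_y e = fst (prod_decode (snd (prod_decode e)))"

definition entry_index :: "nat \<Rightarrow> nat" where
  "entry_index e = fst (prod_decode (snd (prod_decode (snd (prod_decode e)))))"

definition entry_coeff :: "nat \<Rightarrow> nat" where
  "entry_coeff e = snd (prod_decode (snd (prod_decode (snd (prod_decode e)))))"

definition entry_exponent :: "nat \<Rightarrow> int \<times> int" where
  "entry_exponent e = (int_decode (entry_x e), int_decode (entry_y e))"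

lemma dec_entry_eq: "dec_entry e = (entry_exponent e, entry_index e, entry_coeff e)"
  by (simp add: dec_entry_def entry_exponent_def entry_x_def entry_y_def entry_index_def
      entry_coeff_def split: prod.splits)

text \<open>Entries with basis index \<open>\<ge> k\<close> contribute nothing to \<open>decodeM\<close>; the test is
  phrased by truncated subtraction to make it visibly computable.\<close>
definition entry_mult :: "nat \<Rightarrow> nat \<Rightarrow> nat" where
  "entry_mult k e = (if k - entry_index e = 0 then 0 else entry_coeff e)"

lemma entry_index_less: "entry_index e < k \<or> entry_mult k e = 0"
  by (auto simp: entry_mult_def)

definition entry_word :: "nat \<Rightarrow> nat \<Rightarrow> nat list" where
  "entry_word k e = monomial_word k (entry_exponent e) (entry_index e) (entry_mult k e)"

definition int_decode_pos :: "nat \<Rightarrow> nat" where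
  "int_decode_pos u = (if u mod 2 = 0 then u div 2 else 0)"

definition int_decode_neg :: "nat \<Rightarrow> nat" where
  "int_decode_neg u = (if u mod 2 = 0 then 0 else Suc (u div 2))"

lemma nat_int_decode:
  "nat (int_decode u) = int_decode_pos u" "nat (- int_decode u) = int_decode_neg u"
  by (auto simp: int_decode_def sum_decode_def int_decode_pos_def int_decode_neg_def
      odd_iff_mod_2_eq_one)

definition entry_word_code :: "nat \<Rightarrow> nat \<Rightarrow> nat \<Rightarrow> nat" where
  "entry_word_code k e c =
     replicate_code (2 * k) (int_decode_pos (entry_x e)) (replicate_code (2 * k + 1) (int_decode_neg (entry_x e))
     (replicate_code (2 * k + 2) (int_decode_pos (entry_y e)) (replicate_code (2 * k + 3) (int_decode_neg (entry_y e))
     (replicate_code (2 * entry_index e) (entry_mult k e)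
     (replicate_code (2 * k) (int_decode_neg (entry_x e)) (replicate_code (2 * k + 1) (int_decode_pos (entry_x e))
     (replicate_code (2 * k + 2) (int_decode_neg (entry_y e)) (replicate_code (2 * k + 3) (int_decode_pos (entry_y e)) c))))))))"

lemma list_decode_entry_word_code:
  "list_decode (entry_word_code k e c) = entry_word k e @ list_decode c"
  by (simp add: entry_word_code_def entry_word_def monomial_word_def move_word_def
      entry_exponent_def nat_int_decode list_decode_replicate_code)

definition entries_word :: "nat \<Rightarrow> nat list \<Rightarrow> nat list \<Rightarrow> nat list" where
  "entries_word k es acc = foldl (\<lambda>acc e. entry_word k e @ acc) acc es"

text \<open>A state \<open>prod_encode (r, c)\<close> holds the code \<open>r\<close> of the entries still to be
  translated and the code \<open>c\<close> of the word produced so far.\<close>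
definition translate_step :: "nat \<Rightarrow> nat \<Rightarrow> nat" where
  "translate_step k st = (if fst (prod_decode st) = 0 then st else
     prod_encode (snd (prod_decode (fst (prod_decode st) - 1)),
                  entry_word_code k (fst (prod_decode (fst (prod_decode st) - 1))) (snd (prod_decode st))))"

definition translate_iter :: "nat \<Rightarrow> nat \<Rightarrow> nat \<Rightarrow> nat" where
  "translate_iter k i c = rec_nat (prod_encode (c, 0)) (\<lambda>_. translate_step k) i"

text \<open>A code is an upper bound for the length of the list it codes, so \<open>c\<close> steps suffice.\<close>
definition translate :: "nat \<Rightarrow> nat \<Rightarrow> nat" where
  "translate k c = snd (prod_decode (translate_iter k c c))"

lemma translate_iter_invariant:
  "entries_word k (list_decode (fst (prod_decode (translate_iter k i c))))
       (list_decode (snd (prod_decode (translate_iter k i c))))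
     = entries_word k (list_decode c) []
   \<and> fst (prod_decode (translate_iter k i c)) \<le> c - i"
proof (induction i)
  case 0
  then show ?case by (simp add: translate_iter_def)
next
  case (Suc i)
  let ?st = "translate_iter k i c"
  have step: "translate_iter k (Suc i) c = translate_step k ?st"
    by (simp add: translate_iter_def)
  show ?case
  proof (cases "fst (prod_decode ?st)")
    case 0
    then show ?thesis using Suc step by (simp add: translate_step_def)
  next
    case (Suc r)
    obtain e r' where er: "prod_decode r = (e, r')" by (cases "prod_decode r")
    have "r' \<le> r" using er by (metis le_prod_encode_2 prod_decode_inverse)
    moreover have "list_decode (fst (prod_decode ?st)) = e # list_decode r'"
      using Suc er by simp
    ultimately show ?thesis using Suc.IH step Suc er
      by (auto simp: translate_step_def entries_word_def list_decode_entry_word_code)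
  qed
qed

lemma list_decode_translate: "list_decode (translate k c) = entries_word k (list_decode c) []"
proof -
  have "fst (prod_decode (translate_iter k c c)) = 0"
    using translate_iter_invariant[of k c c] by simp
  then show ?thesis
    using translate_iter_invariant[of k c c] unfolding translate_def by (simp add: entries_word_def)
qed

lemma computable_translate_step:
  "computable n a \<Longrightarrow> computable n (\<lambda>xs. translate_step k (a xs))"
  unfolding translate_step_def entry_word_code_def int_decode_pos_def int_decode_neg_def
    entry_mult_def entry_x_def entry_y_def entry_index_def entry_coeff_def
  by (intro computable_If_zero computable_prod_encode computable_fst_prod_decode
      computable_snd_prod_decode computable_diff computable_replicate_code computable_mult
      computable_add computable_mod_2 computable_div_2 computable_Suc computable_const)

lemma computable_translate: "computable 1 (\<lambda>xs. translate k (xs ! 0))"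
proof -
  have "computable (1 + 1) (\<lambda>xs. translate_iter k (xs ! 0) (xs ! 1))"
    by (intro computable_rec_nat[where base="\<lambda>ys. prod_encode (ys ! 0, 0)"
          and step="\<lambda>ys. translate_step k (ys ! 1)"]
        computable_prod_encode computable_translate_step computable_nth computable_const)
      (auto simp: length_Suc_conv translate_iter_def)
  then have "computable 2 (\<lambda>xs. translate_iter k (xs ! 0) (xs ! 1))"
    by (simp add: numeral_2_eq_2)
  from computable_comp2[OF this computable_nth[of 0 1] computable_nth[of 0 1]]
  have "computable 1 (\<lambda>xs. translate_iter k (xs ! 0) (xs ! 0))" by simp
  from computable_snd_prod_decode[OF this] show ?thesis unfolding translate_def .
qed

definition entry_vec :: "nat \<Rightarrow> nat \<Rightarrow> melt" where
  "entry_vec k e = mshift (entry_exponent e)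
     (\<lambda>x. int (entry_mult k e) * letter_vec k (2 * entry_index e) x)"

lemma entry_vec_apply:
  "entry_vec k e (g, j) =
     (if entry_index e < k \<and> g = entry_exponent e \<and> j = entry_index e then int (entry_coeff e) else 0)"
  by (cases g; cases "entry_exponent e") (auto simp: entry_vec_def mshift_apply letter_vec_basis entry_mult_def)

lemma word_val_entries_word:
  "word_vec k (entries_word k es w) = sum_list (map (entry_vec k) es) + word_vec k w
   \<and> word_shift k (entries_word k es w) = word_shift k w"
proof (induction es arbitrary: w)
  case (Cons e es)
  have "entries_word k (e # es) w = entries_word k es (entry_word k e @ w)"
    by (simp add: entries_word_def)
  then show ?case
    using Cons.IH[of "entry_word k e @ w"] word_val_monomial_word[OF entry_index_less[of e k]]
    by (simp add: entry_word_def entry_vec_def algebra_simps)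
qed (simp add: entries_word_def)

lemma sum_list_fun_apply: "sum_list fs x = sum_list (map (\<lambda>f. f x) fs)"
  by (induction fs) auto

lemma decodeM_eq: "decodeM n k c = (\<lambda>x. word_vec k (entries_word k (list_decode c) []) x mod int n)"
proof (rule ext, clarify)
  fix g :: "int \<times> int" and j :: nat
  let ?es = "list_decode c"
  let ?coeff = "\<lambda>e. if fst e = g \<and> fst (snd e) = j then int (snd (snd e)) else 0"
  have "word_vec k (entries_word k ?es []) (g, j) = sum_list (map (\<lambda>e. entry_vec k e (g, j)) ?es)"
    using word_val_entries_word[of k ?es "[]"] by (simp add: sum_list_fun_apply o_def)
  also have "\<dots> = (if j < k then sum_list (map ?coeff (map dec_entry ?es)) else 0)"
  proof (cases "j < k")
    case False
    then have "sum_list (map (\<lambda>e. entry_vec k e (g, j)) es) = 0" for es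
      by (induction es) (auto simp: entry_vec_apply)
    with False show ?thesis by simp
  qed (auto simp: entry_vec_apply dec_entry_eq intro!: arg_cong[where f=sum_list])
  finally show "decodeM n k c (g, j) = word_vec k (entries_word k ?es []) (g, j) mod int n"
    by (simp add: decodeM_def)
qed

lemma set_entries_word:
  "set w \<subseteq> {..<2 * (k + 2)} \<Longrightarrow> set (entries_word k es w) \<subseteq> {..<2 * (k + 2)}"
proof (induction es arbitrary: w)
  case (Cons e es)
  have "entries_word k (e # es) w = entries_word k es (entry_word k e @ w)"
    by (simp add: entries_word_def)
  then show ?case
    using Cons.IH[of "entry_word k e @ w"] Cons.prems set_monomial_word[OF entry_index_less]
    by (simp add: entry_word_def)
qed (simp add: entries_word_def)

lemma word_val_translate: "word_val n k (decodeW k (translate k c)) = (decodeM n k c, 0)"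
proof -
  let ?w = "entries_word k (list_decode c) []"
  have "decodeW k (translate k c) = map (\<lambda>x. x mod (2 * (k + 2))) ?w"
    by (simp add: decodeW_def list_decode_translate)
  also have "\<dots> = ?w"
    using set_entries_word[of "[]" k "list_decode c"] by (intro map_idI) auto
  finally show ?thesis
    using word_val_entries_word[of k "list_decode c" "[]"] by (simp add: word_val_eq decodeM_eq)
qed

fun rexp_of_word :: "'a list \<Rightarrow> 'a rexp" where
  "rexp_of_word [] = ROne"
| "rexp_of_word (a # w) = RTimes (RAtom a) (rexp_of_word w)"

fun rexp_sum :: "'a rexp list \<Rightarrow> 'a rexp" where
  "rexp_sum [] = RZero"
| "rexp_sum (r # rs) = RPlus r (rexp_sum rs)"

lemma lang_rexp_of_word [simp]: "lang (rexp_of_word w) = {w}"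
  by (induction w) auto

lemma atoms_rexp_of_word [simp]: "atoms (rexp_of_word w) = set w"
  by (induction w) auto

lemma lang_rexp_sum [simp]: "lang (rexp_sum rs) = (\<Union>r\<in>set rs. lang r)"
  by (induction rs) auto

lemma atoms_rexp_sum [simp]: "atoms (rexp_sum rs) = (\<Union>r\<in>set rs. atoms r)"
  by (induction rs) auto

lemma lang_RStar_RAtom: "lang (RStar (RAtom a)) = range (\<lambda>m. replicate m a)"
proof (intro set_eqI iffI)
  fix w
  assume "w \<in> lang (RStar (RAtom a))"
  then obtain ws where w: "w = concat ws" and ws: "set ws \<subseteq> {[a]}" by auto
  from ws have "concat ws = replicate (length ws) a" by (induction ws) auto
  with w show "w \<in> range (\<lambda>m. replicate m a)" by blast
next
  fix w
  assume "w \<in> range (\<lambda>m. replicate m a)"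
  then obtain m where w: "w = replicate m a" by blast
  have "concat (replicate m [a]) = replicate m a" by (induction m) auto
  then show "w \<in> lang (RStar (RAtom a))"
    unfolding w lang.simps(6) by (intro CollectI exI[of _ "replicate m [a]"]) auto
qed

definition letters_rexp :: "'a list \<Rightarrow> 'a rexp" where
  "letters_rexp as = RStar (rexp_sum (map RAtom as))"

lemma lang_letters_rexp: "lang (letters_rexp as) = {w. set w \<subseteq> set as}"
proof -
  have "w = concat (map (\<lambda>l. [l]) w)" for w :: "'a list"
    by (induction w) auto
  then show ?thesis unfolding letters_rexp_def by (fastforce intro!: exI[of _ "map (\<lambda>l. [l]) _"])
qed

lemma atoms_letters_rexp [simp]: "atoms (letters_rexp as) = set as"
  by (auto simp: letters_rexp_def)

section \<open>A rational subset for the subset sum problem\<close>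

definition moves_rexp :: "nat \<Rightarrow> nat rexp" where
  "moves_rexp k = letters_rexp [2 * k, 2 * k + 1, 2 * k + 2, 2 * k + 3]"

lemma lang_moves_rexp: "lang (moves_rexp k) = {w. set w \<subseteq> {2 * k, 2 * k + 1, 2 * k + 2, 2 * k + 3}}"
  by (simp add: moves_rexp_def lang_letters_rexp)

lemma exists_moves_word: "\<exists>w \<in> lang (moves_rexp k). word_shift k w = g \<and> word_vec k w = 0"
  using set_move_word word_shift_move_word word_vec_move_word unfolding lang_moves_rexp by blast

text \<open>Words whose positions are lexicographically positive; every positive position is reached.\<close>
definition step_rexp :: "nat \<Rightarrow> nat rexp" where
  "step_rexp k =
     RPlus (RTimes (RAtom (2 * k + 2)) (RStar (RAtom (2 * k + 2))))
       (RTimes (RAtom (2 * k))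
         (RTimes (RStar (RAtom (2 * k))) (RPlus (RStar (RAtom (2 * k + 2))) (RStar (RAtom (2 * k + 3))))))"

lemma in_lang_plus_times_star:
  "t \<in> lang (RPlus (RTimes (RAtom y) (RStar (RAtom y)))
             (RTimes (RAtom x) (RTimes (RStar (RAtom x)) (RPlus (RStar (RAtom y)) (RStar (RAtom z)))))) \<longleftrightarrow>
   (\<exists>m. t = y # replicate m y) \<or> (\<exists>m p. t = x # replicate m x @ replicate p y) \<or>
   (\<exists>m p. t = x # replicate m x @ replicate p z)"
  unfolding lang.simps(3-5) lang_RStar_RAtom by fastforce

lemma in_lang_step_rexp:
  "t \<in> lang (step_rexp k) \<longleftrightarrow>
     (\<exists>m. t = (2 * k + 2) # replicate m (2 * k + 2)) \<or>
     (\<exists>m p. t = 2 * k # replicate m (2 * k) @ replicate p (2 * k + 2)) \<or>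
     (\<exists>m p. t = 2 * k # replicate m (2 * k) @ replicate p (2 * k + 3))"
  unfolding step_rexp_def by (rule in_lang_plus_times_star)

lemma word_val_step:
  assumes "t \<in> lang (step_rexp k)"
  shows "word_vec k t = 0" and "0 < word_shift k t"
proof -
  from assms have "set t \<subseteq> {2 * k, 2 * k + 1, 2 * k + 2, 2 * k + 3}"
    unfolding in_lang_step_rexp by auto
  then show "word_vec k t = 0" by (rule word_vec_move_letters)
  from assms show "0 < word_shift k t"
    unfolding in_lang_step_rexp
    by (auto simp: word_shift_append word_shift_replicate_moves letter_shift_moves zero_prod_def)
qed

lemma exists_step_word:
  assumes "0 < g"
  shows "\<exists>t \<in> lang (step_rexp k). word_shift k t = g"
proof -
  obtain a b where g: "g = (a, b)" by (cases g)
  consider "a = 0" "0 < b" | "0 < a" "0 \<le> b" | "0 < a" "b < 0"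
    using assms g by (force simp: zero_prod_def)
  then show ?thesis
  proof cases
    case 1
    have "word_shift k ((2 * k + 2) # replicate (nat b - 1) (2 * k + 2)) = (0, 1) + (0, int (nat b - 1))"
      by (simp only: word_shift.simps letter_shift_moves word_shift_replicate_moves)
    also have "\<dots> = g" using 1 g by simp
    finally show ?thesis using in_lang_step_rexp by blast
  next
    case 2
    have "word_shift k (2 * k # replicate (nat a - 1) (2 * k) @ replicate (nat b) (2 * k + 2))
        = (1, 0) + ((int (nat a - 1), 0) + (0, int (nat b)))"
      by (simp only: word_shift.simps word_shift_append letter_shift_moves word_shift_replicate_moves)
    also have "\<dots> = g" using 2 g by simp
    finally show ?thesis using in_lang_step_rexp by blast
  next
    case 3
    have "word_shift k (2 * k # replicate (nat a - 1) (2 * k) @ replicate (nat (- b)) (2 * k + 3))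
        = (1, 0) + ((int (nat a - 1), 0) + (0, - int (nat (- b))))"
      by (simp only: word_shift.simps word_shift_append letter_shift_moves word_shift_replicate_moves)
    also have "\<dots> = g" using 3 g by simp
    finally show ?thesis using in_lang_step_rexp by blast
  qed
qed

definition words_rexp :: "'a list list \<Rightarrow> 'a rexp" where
  "words_rexp ws = rexp_sum (map rexp_of_word ws)"

lemma lang_words_rexp [simp]: "lang (words_rexp ws) = set ws"
  by (auto simp: words_rexp_def)

definition subset_sum_rexp :: "nat \<Rightarrow> nat list list \<Rightarrow> nat rexp" where
  "subset_sum_rexp k fws =
     RTimes (moves_rexp k) (RTimes (RStar (RTimes (step_rexp k) (words_rexp fws))) (moves_rexp k))"

lemma atoms_subset_sum_rexp:
  assumes "\<forall>w\<in>set fws. set w \<subseteq> {..<2 * (k + 2)}"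
  shows "atoms (subset_sum_rexp k fws) \<subseteq> {..<2 * (k + 2)}"
  using assms by (auto simp: subset_sum_rexp_def moves_rexp_def step_rexp_def words_rexp_def)

definition shift_sum :: "((int \<times> int) \<times> melt) list \<Rightarrow> melt" where
  "shift_sum ps = (\<Sum>(g, f)\<leftarrow>ps. mshift g f)"

lemma shift_sum_simps [simp]:
  "shift_sum [] = 0" "shift_sum ((g, f) # ps) = mshift g f + shift_sum ps"
  by (simp_all add: shift_sum_def)

lemma msum_eq_shift_sum: "msum n ps = (\<lambda>x. shift_sum ps x mod int n)"
proof (induction ps)
  case Nil
  then show ?case by (simp add: msum_def mzero_def)
next
  case (Cons p ps)
  then show ?case
    by (cases p) (simp add: msum_def madd_def fun_eq_iff mod_add_right_eq)
qed

lemma shift_sum_mset_eq: "mset qs = mset ps \<Longrightarrow> shift_sum qs = shift_sum ps"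
  unfolding shift_sum_def by (metis mset_map sum_mset_sum_list)

definition shift_pairs :: "int \<times> int \<Rightarrow> ((int \<times> int) \<times> 'a) list \<Rightarrow> ((int \<times> int) \<times> 'a) list" where
  "shift_pairs g ps = map (\<lambda>(h, f). (g + h, f)) ps"

lemma shift_pairs_simps [simp]:
  "length (shift_pairs g ps) = length ps"
  "map fst (shift_pairs g ps) = map ((+) g) (map fst ps)"
  "map snd (shift_pairs g ps) = map snd ps"
  "shift_pairs g (shift_pairs h ps) = shift_pairs (g + h) ps"
  "shift_pairs 0 ps = ps"
  by (induction ps) (auto simp: shift_pairs_def add.assoc)

lemma mshift_shift_sum: "mshift g (shift_sum ps) = shift_sum (shift_pairs g ps)"
proof (induction ps)
  case Nil
  show ?case by (simp add: shift_pairs_def fun_eq_iff mshift_apply)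
qed (auto simp: shift_pairs_def mshift_add mshift_mshift)

lemma lex_add_less_add_left: "(a :: int \<times> int) < b \<Longrightarrow> g + a < g + b"
  by (cases a; cases b; cases g) auto

lemma sorted_wrt_less_map_add:
  "sorted_wrt (<) xs \<Longrightarrow> sorted_wrt (<) (map ((+) (g :: int \<times> int)) xs)"
  by (induction xs) (auto simp: lex_add_less_add_left)

lemma exists_less_all: "\<exists>p :: int \<times> int. \<forall>x\<in>set xs. p < x"
proof (induction xs)
  case (Cons x xs)
  then obtain p where "\<forall>y\<in>set xs. p < y" by blast
  moreover have "(fst x - 1, snd x) < x" by (cases x) simp
  ultimately show ?case
    by (intro exI[of _ "min p (fst x - 1, snd x)"]) (auto simp: min_less_iff_disj)
qed simp

lemma word_vec_star_step:
  assumes "\<forall>w\<in>set fws. word_shift k w = 0"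
  shows "set ws \<subseteq> lang (RTimes (step_rexp k) (words_rexp fws)) \<Longrightarrow>
    \<exists>ps. sorted_wrt (<) (0 # map fst ps) \<and> set (map snd ps) \<subseteq> word_vec k ` set fws
      \<and> word_vec k (concat ws) = shift_sum ps"
proof (induction ws)
  case (Cons w ws)
  then obtain ps where ps: "sorted_wrt (<) (0 # map fst ps)" "set (map snd ps) \<subseteq> word_vec k ` set fws"
    "word_vec k (concat ws) = shift_sum ps" by auto
  from Cons.prems obtain t fw where w: "w = t @ fw" "t \<in> lang (step_rexp k)" "fw \<in> set fws"
    by auto
  let ?s = "word_shift k t"
  have "word_vec k (concat (w # ws)) = mshift ?s (word_vec k fw + shift_sum ps)"
    using w assms ps(3) word_val_step(1)[OF w(2)]
    by (simp add: word_vec_append mshift_add mshift_mshift)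
  also have "\<dots> = shift_sum ((?s, word_vec k fw) # shift_pairs ?s ps)"
    by (simp add: mshift_add mshift_shift_sum)
  finally show ?case
    using sorted_wrt_less_map_add[OF ps(1), of ?s] word_val_step(2)[OF w(2)] ps(2) w(3)
    by (intro exI[of _ "(?s, word_vec k fw) # shift_pairs ?s ps"]) auto
qed (intro exI[of _ "[]"], simp)

lemma exists_star_step_word:
  assumes "\<forall>w\<in>set fws. word_shift k w = 0"
  shows "sorted_wrt (<) (0 # map fst ps) \<Longrightarrow> set (map snd ps) \<subseteq> word_vec k ` set fws \<Longrightarrow>
    \<exists>ws. set ws \<subseteq> lang (RTimes (step_rexp k) (words_rexp fws)) \<and> word_vec k (concat ws) = shift_sum ps"
proof (induction "length ps" arbitrary: ps)
  case 0
  then show ?case by (intro exI[of _ "[]"]) simp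
next
  case (Suc l)
  then obtain g f ps0 where ps: "ps = (g, f) # ps0" by (cases ps) auto
  from Suc.prems ps have "0 < g" "f \<in> word_vec k ` set fws" by simp_all
  then obtain t fw where t: "t \<in> lang (step_rexp k)" "word_shift k t = g"
    and fw: "fw \<in> set fws" "word_vec k fw = f"
    using exists_step_word by blast
  have "sorted_wrt (<) (map ((+) (- g)) (g # map fst ps0))"
    using Suc.prems(1) ps by (intro sorted_wrt_less_map_add) simp
  then have "sorted_wrt (<) (0 # map fst (shift_pairs (- g) ps0))" by simp
  moreover have "l = length (shift_pairs (- g) ps0)" using Suc.hyps(2) ps by simp
  moreover have "set (map snd (shift_pairs (- g) ps0)) \<subseteq> word_vec k ` set fws"
    using Suc.prems(2) ps by simp
  ultimately obtain ws where ws: "set ws \<subseteq> lang (RTimes (step_rexp k) (words_rexp fws))"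
    "word_vec k (concat ws) = shift_sum (shift_pairs (- g) ps0)"
    using Suc.hyps(1) by blast
  have "word_vec k (concat ((t @ fw) # ws)) = mshift g (f + shift_sum (shift_pairs (- g) ps0))"
    using t fw ws assms word_val_step(1)[OF t(1)]
    by (simp add: word_vec_append mshift_add mshift_mshift)
  also have "\<dots> = shift_sum ps"
    by (simp add: ps mshift_add mshift_shift_sum)
  finally show ?case
    using ws(1) t(1) fw(1) by (intro exI[of _ "(t @ fw) # ws"]) auto
qed

lemma subset_sum_rexp_sound:
  assumes "\<forall>w\<in>set fws. word_shift k w = 0" and "u \<in> lang (subset_sum_rexp k fws)"
  shows "\<exists>ps. distinct (map fst ps) \<and> set (map snd ps) \<subseteq> word_vec k ` set fws
           \<and> word_vec k u = shift_sum ps"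
proof -
  from assms(2) obtain a1 a2 ws where u: "u = a1 @ concat ws @ a2"
    and a: "a1 \<in> lang (moves_rexp k)" "a2 \<in> lang (moves_rexp k)"
    and ws: "set ws \<subseteq> lang (RTimes (step_rexp k) (words_rexp fws))"
    unfolding subset_sum_rexp_def lang.simps(5,6) by blast
  obtain ps where ps: "sorted_wrt (<) (0 # map fst ps)" "set (map snd ps) \<subseteq> word_vec k ` set fws"
    "word_vec k (concat ws) = shift_sum ps"
    using word_vec_star_step[OF assms(1) ws] by blast
  have "word_vec k u = shift_sum (shift_pairs (word_shift k a1) ps)"
    using a ps(3) by (simp add: u lang_moves_rexp word_vec_append word_vec_move_letters mshift_shift_sum)
  moreover have "distinct (map fst (shift_pairs (word_shift k a1) ps))"
    using sorted_wrt_less_map_add[of "map fst ps" "word_shift k a1"] ps(1)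
    by (simp add: strict_sorted_iff)
  ultimately show ?thesis using ps(2) by (intro exI[of _ "shift_pairs (word_shift k a1) ps"]) simp
qed

lemma subset_sum_rexp_complete:
  assumes "\<forall>w\<in>set fws. word_shift k w = 0"
    and "distinct (map fst ps)" and "set (map snd ps) \<subseteq> word_vec k ` set fws"
  shows "\<exists>u \<in> lang (subset_sum_rexp k fws). word_vec k u = shift_sum ps \<and> word_shift k u = 0"
proof -
  define qs where "qs = sort_key fst ps"
  have qs: "mset qs = mset ps" by (simp add: qs_def)
  then have "distinct (map fst qs)" "set (map snd qs) \<subseteq> word_vec k ` set fws"
    using assms(2,3) by (metis mset_map mset_eq_imp_distinct_iff, metis mset_map mset_eq_setD)
  then have sorted: "sorted_wrt (<) (map fst qs)"
    by (simp add: strict_sorted_iff qs_def)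
  obtain p where p: "\<forall>x\<in>set (map fst qs). p < x" using exists_less_all by blast
  have "sorted_wrt (<) (map ((+) (- p)) (p # map fst qs))"
    using sorted p by (intro sorted_wrt_less_map_add) simp
  then obtain ws where ws: "set ws \<subseteq> lang (RTimes (step_rexp k) (words_rexp fws))"
    "word_vec k (concat ws) = shift_sum (shift_pairs (- p) qs)"
    using exists_star_step_word[OF assms(1), of "shift_pairs (- p) qs"]
      \<open>set (map snd qs) \<subseteq> _\<close> by auto
  obtain a1 where a1: "a1 \<in> lang (moves_rexp k)" "word_shift k a1 = p" "word_vec k a1 = 0"
    using exists_moves_word by blast
  obtain a2 where a2: "a2 \<in> lang (moves_rexp k)" "word_shift k a2 = - (p + word_shift k (concat ws))"
    "word_vec k a2 = 0"
    using exists_moves_word by blast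
  let ?u = "a1 @ concat ws @ a2"
  have "?u \<in> lang (subset_sum_rexp k fws)"
    using a1(1) a2(1) ws(1) unfolding subset_sum_rexp_def lang.simps(5,6) by blast
  moreover have "word_vec k ?u = shift_sum ps"
    using a1 a2 ws(2) shift_sum_mset_eq[OF qs]
    by (simp add: word_vec_append mshift_shift_sum)
  moreover have "word_shift k ?u = 0"
    using a1 a2 by (simp add: word_shift_append)
  ultimately show ?thesis by blast
qed

lemma subset_sum_set_eq:
  "subset_sum_set n F = {msum n ps | ps. distinct (map fst ps) \<and> set (map snd ps) \<subseteq> F}"
proof (intro set_eqI iffI)
  fix m
  assume "m \<in> subset_sum_set n F"
  then obtain gs fs where "length gs = length fs" "distinct gs" "set fs \<subseteq> F" "m = msum n (zip gs fs)"
    unfolding subset_sum_set_def by blast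
  then show "m \<in> {msum n ps | ps. distinct (map fst ps) \<and> set (map snd ps) \<subseteq> F}"
    by (intro CollectI exI[of _ "zip gs fs"]) simp
next
  fix m
  assume "m \<in> {msum n ps | ps. distinct (map fst ps) \<and> set (map snd ps) \<subseteq> F}"
  then obtain ps where "m = msum n ps" "distinct (map fst ps)" "set (map snd ps) \<subseteq> F" by blast
  then show "m \<in> subset_sum_set n F"
    unfolding subset_sum_set_def
    by (intro CollectI exI[of _ "map fst ps"] exI[of _ "map snd ps"]) (simp add: zip_map_fst_snd)
qed

lemma subset_sum_rexp_correct:
  assumes "\<forall>w\<in>set fws. word_shift k w = 0" and "word_vec k ` set fws = F"
  shows "(m, 0) \<in> word_val n k ` lang (subset_sum_rexp k fws) \<longleftrightarrow> m \<in> subset_sum_set n F"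
proof
  assume "(m, 0) \<in> word_val n k ` lang (subset_sum_rexp k fws)"
  then obtain u where u: "u \<in> lang (subset_sum_rexp k fws)" "word_val n k u = (m, 0)" by auto
  obtain ps where ps: "distinct (map fst ps)" "set (map snd ps) \<subseteq> F" "word_vec k u = shift_sum ps"
    using subset_sum_rexp_sound[OF assms(1) u(1)] assms(2) by blast
  have "m = msum n ps" using u(2) ps(3) by (simp add: word_val_eq msum_eq_shift_sum)
  with ps(1,2) show "m \<in> subset_sum_set n F" by (auto simp: subset_sum_set_eq)
next
  assume "m \<in> subset_sum_set n F"
  then obtain ps where ps: "m = msum n ps" "distinct (map fst ps)" "set (map snd ps) \<subseteq> F"
    by (auto simp: subset_sum_set_eq)
  obtain u where u: "u \<in> lang (subset_sum_rexp k fws)" "word_vec k u = shift_sum ps" "word_shift k u = 0"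
    using subset_sum_rexp_complete[OF assms(1) ps(2)] ps(3) assms(2) by blast
  then have "word_val n k u = (m, 0)" by (simp add: word_val_eq msum_eq_shift_sum ps(1))
  with u(1) show "(m, 0) \<in> word_val n k ` lang (subset_sum_rexp k fws)" by force
qed

lemma exists_word_of_vec:
  assumes "finite S" and "{x. f x \<noteq> 0} \<subseteq> S" and "\<forall>x. 0 \<le> f x" and "\<forall>g j. k \<le> j \<longrightarrow> f (g, j) = 0"
  shows "\<exists>w. set w \<subseteq> {..<2 * (k + 2)} \<and> word_vec k w = f \<and> word_shift k w = 0"
  using assms
proof (induction S arbitrary: f rule: finite_induct)
  case empty
  then have "f = 0" by (auto simp: fun_eq_iff)
  then show ?case by (intro exI[of _ "[]"]) simp
next
  case (insert p S)
  obtain g j where p: "p = (g, j)" by (cases p)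
  have "\<exists>w. set w \<subseteq> {..<2 * (k + 2)} \<and> word_vec k w = f(p := 0) \<and> word_shift k w = 0"
    using insert.prems by (intro insert.IH) auto
  then obtain w where w: "set w \<subseteq> {..<2 * (k + 2)}" "word_vec k w = f(p := 0)" "word_shift k w = 0"
    by blast
  have jk: "j < k \<or> nat (f p) = 0"
  proof (cases "j < k")
    case False
    with insert.prems(3) p have "f p = 0" by (cases g) (simp add: not_less)
    then show ?thesis by simp
  qed simp
  have f: "mshift g (\<lambda>x. int (nat (f p)) * letter_vec k (2 * j) x) + f(p := 0) = f"
  proof (rule ext)
    fix x :: "(int \<times> int) \<times> nat"
    obtain a b i where x: "x = ((a, b), i)" by (metis prod.collapse)
    show "(mshift g (\<lambda>x. int (nat (f p)) * letter_vec k (2 * j) x) + f(p := 0)) x = f x"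
      using insert.prems(2,3) p x by (cases "x = p") (auto simp: mshift_apply letter_vec_basis)
  qed
  have "word_vec k (monomial_word k g j (nat (f p)) @ w) = f"
    using word_val_monomial_word(1)[OF jk] w(2) f by simp
  moreover have "set (monomial_word k g j (nat (f p)) @ w) \<subseteq> {..<2 * (k + 2)}"
    using set_monomial_word[OF jk, of g] w(1) by (simp only: set_append Un_subset_iff)
  moreover have "word_shift k (monomial_word k g j (nat (f p)) @ w) = 0"
    using word_val_monomial_word(2)[OF jk] w(3) by simp
  ultimately show ?case by blast
qed

lemma exists_words_of_set:
  assumes "finite F" and "F \<subseteq> Mcar n k"
  shows "\<exists>fws. (\<forall>w\<in>set fws. set w \<subseteq> {..<2 * (k + 2)} \<and> word_shift k w = 0) \<and> word_vec k ` set fws = F"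
proof -
  have "\<forall>f\<in>F. \<exists>w. set w \<subseteq> {..<2 * (k + 2)} \<and> word_vec k w = f \<and> word_shift k w = 0"
  proof
    fix f
    assume "f \<in> F"
    with assms(2) have "f \<in> Mcar n k" by blast
    then show "\<exists>w. set w \<subseteq> {..<2 * (k + 2)} \<and> word_vec k w = f \<and> word_shift k w = 0"
      unfolding Mcar_def by (intro exists_word_of_vec[OF _ order_refl]) auto
  qed
  from bchoice[OF this] obtain W
    where W: "\<forall>f\<in>F. set (W f) \<subseteq> {..<2 * (k + 2)} \<and> word_vec k (W f) = f \<and> word_shift k (W f) = 0" ..
  obtain fl where fl: "set fl = F" using finite_list[OF assms(1)] by blast
  have "word_vec k ` set (map W fl) = F"
    using W unfolding fl set_map image_image by (simp cong: image_cong)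
  with W fl show ?thesis by (intro exI[of _ "map W fl"]) auto
qed

theorem proposition2:
  fixes n k :: nat and F :: "melt set"
  assumes "n \<ge> 2"
    and "finite F" and "F \<subseteq> Mcar n k" and "mzero \<notin> F"
    and "\<not> decidable {c. decodeM n k c \<in> subset_sum_set n F}"
  shows "\<exists>r :: nat rexp. atoms r \<subseteq> {..<2 * (k + 2)} \<and>
           \<not> decidable {c. word_val n k (decodeW k c) \<in> word_val n k ` lang r}"
proof -
  obtain fws where fws: "\<forall>w\<in>set fws. set w \<subseteq> {..<2 * (k + 2)} \<and> word_shift k w = 0"
    "word_vec k ` set fws = F"
    using exists_words_of_set[OF assms(2,3)] by blast
  let ?r = "subset_sum_rexp k fws"
  let ?B = "{c. word_val n k (decodeW k c) \<in> word_val n k ` lang ?r}"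
  have "\<forall>w\<in>set fws. word_shift k w = 0" using fws(1) by blast
  from subset_sum_rexp_correct[OF this fws(2)]
  have reduction: "{c. decodeM n k c \<in> subset_sum_set n F} = translate k -` ?B"
    by (simp add: vimage_def word_val_translate)
  have "\<not> decidable ?B"
  proof
    assume "decidable ?B"
    then have "decidable (translate k -` ?B)" by (rule decidable_vimage[OF computable_translate])
    with assms(5) reduction show False by simp
  qed
  moreover have "atoms ?r \<subseteq> {..<2 * (k + 2)}"
    using fws(1) by (intro atoms_subset_sum_rexp) blast
  ultimately show ?thesis by blast
qed
end
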